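(* Let $H$ be a capacitated hypergraph with $n$ vertices, let $\alpha\ge0$, and let $H'$ be an $\alpha$-contraction of $H$ (with respect to some MA-ordering). Then $\text{sum-deg}(H')\le 2\alpha n$.
   Context: A hypergraph $H=(V,E)$ has finite vertex set $V$, a finite multiset $E$ of edges (subsets of $V$) and capacities $c:E\to\mathbb{R}_{\ge0}$; $\text{sum-deg}(H)=\sum_{e\in E}|e|c(e)$. For subsets $A_1,\ldots,A_k$, $d(A_1,\ldots,A_k)$ is the total capacity of edges meeting every $A_i$ (a vertex $v$ stands for $\{v\}$). For an ordering $v_1,\ldots,v_n$, $V_i=\{v_1,\ldots,v_i\}$; it is an MA-ordering if $d(V_{i-1},v_i)\ge d(V_{i-1},v_j)$ for all $1\le i<j\le n$. Given an MA-ordering and $\alpha\ge0$, a set of consecutive vertices $v_a,\ldots,v_b$ ($a\le b$) is $\alpha$-tight if $d(V_i,v_{i+1})\ge\alpha$ for all $a\le i<b$. The maximal $\alpha$-tight sets partition $V$; the $\alpha$-contraction contracts each maximal $\alpha$-tight set into a single vertex and discards edges that become singletons, keeping capacities. *)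

theory Defs
  imports Complex_Main
begin

text \<open>A capacitated hypergraph: finite vertex set V, a finite index set I of edges
  (indices allow a multiset of edges), the edge map ed and capacities c.\<close>

definition hypergraph :: "'v set \<Rightarrow> 'e set \<Rightarrow> ('e \<Rightarrow> 'v set) \<Rightarrow> ('e \<Rightarrow> real) \<Rightarrow> bool" where
  "hypergraph V I ed c \<longleftrightarrow> finite V \<and> finite I \<and> (\<forall>e\<in>I. ed e \<subseteq> V) \<and> (\<forall>e\<in>I. 0 \<le> c e)"

definition sum_deg :: "'e set \<Rightarrow> ('e \<Rightarrow> 'v set) \<Rightarrow> ('e \<Rightarrow> real) \<Rightarrow> real" where
  "sum_deg I ed c = (\<Sum>e\<in>I. real (card (ed e)) * c e)"

definition dd :: "'e set \<Rightarrow> ('e \<Rightarrow> 'v set) \<Rightarrow> ('e \<Rightarrow> real) \<Rightarrow> 'v set list \<Rightarrow> real" where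
  "dd I ed c As = (\<Sum>e\<in>{e\<in>I. \<forall>A\<in>set As. ed e \<inter> A \<noteq> {}}. c e)"

text \<open>Orderings are lists vs (0-indexed); vs ! i is v_{i+1} and set (take i vs) is V_i.\<close>
definition ordering_of :: "'v set \<Rightarrow> 'v list \<Rightarrow> bool" where
  "ordering_of V vs \<longleftrightarrow> distinct vs \<and> set vs = V"

definition MA_ordering :: "'v set \<Rightarrow> 'e set \<Rightarrow> ('e \<Rightarrow> 'v set) \<Rightarrow> ('e \<Rightarrow> real) \<Rightarrow> 'v list \<Rightarrow> bool" where
  "MA_ordering V I ed c vs \<longleftrightarrow> ordering_of V vs \<and>
     (\<forall>i j. i < j \<and> j < length vs \<longrightarrow>
        dd I ed c [set (take i vs), {vs ! j}] \<le> dd I ed c [set (take i vs), {vs ! i}])"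

text \<open>The consecutive vertices at (0-based) positions p..q are alpha-tight iff
  d(V_i, v_{i+1}) \<ge> alpha for all 1-based a \<le> i < b, i.e. for 0-based p < i \<le> q:
  d(set (take i vs), vs ! i) \<ge> alpha.\<close>
definition alpha_tight :: "'e set \<Rightarrow> ('e \<Rightarrow> 'v set) \<Rightarrow> ('e \<Rightarrow> real) \<Rightarrow> 'v list \<Rightarrow> real \<Rightarrow> 'v set \<Rightarrow> bool" where
  "alpha_tight I ed c vs \<alpha> S \<longleftrightarrow> (\<exists>p q. p \<le> q \<and> q < length vs \<and>
      S = {vs ! i | i. p \<le> i \<and> i \<le> q} \<and>
      (\<forall>i. p < i \<and> i \<le> q \<longrightarrow> \<alpha> \<le> dd I ed c [set (take i vs), {vs ! i}]))"

definition max_alpha_tight :: "'e set \<Rightarrow> ('e \<Rightarrow> 'v set) \<Rightarrow> ('e \<Rightarrow> real) \<Rightarrow> 'v list \<Rightarrow> real \<Rightarrow> 'v set \<Rightarrow> bool" where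
  "max_alpha_tight I ed c vs \<alpha> S \<longleftrightarrow> alpha_tight I ed c vs \<alpha> S \<and>
      (\<forall>T. alpha_tight I ed c vs \<alpha> T \<and> S \<subseteq> T \<longrightarrow> T = S)"

definition contr_map :: "'e set \<Rightarrow> ('e \<Rightarrow> 'v set) \<Rightarrow> ('e \<Rightarrow> real) \<Rightarrow> 'v list \<Rightarrow> real \<Rightarrow> 'v \<Rightarrow> 'v set" where
  "contr_map I ed c vs \<alpha> v = (THE S. max_alpha_tight I ed c vs \<alpha> S \<and> v \<in> S)"

text \<open>The alpha-contraction H': vertices are the maximal alpha-tight sets, the edges are the
  images of the edges of H (same indices, same capacities), discarding those that become singletons.\<close>
definition contr_vertices where
  "contr_vertices I ed c vs \<alpha> = {S. max_alpha_tight I ed c vs \<alpha> S}"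

definition contr_edge_idx :: "'e set \<Rightarrow> ('e \<Rightarrow> 'v set) \<Rightarrow> ('e \<Rightarrow> real) \<Rightarrow> 'v list \<Rightarrow> real \<Rightarrow> 'e set" where
  "contr_edge_idx I ed c vs \<alpha> = {e\<in>I. card (contr_map I ed c vs \<alpha> ` ed e) \<noteq> 1}"

definition contr_edge :: "'e set \<Rightarrow> ('e \<Rightarrow> 'v set) \<Rightarrow> ('e \<Rightarrow> real) \<Rightarrow> 'v list \<Rightarrow> real \<Rightarrow> 'e \<Rightarrow> 'v set set" where
  "contr_edge I ed c vs \<alpha> e = contr_map I ed c vs \<alpha> ` ed e"

end

theory Submission
  imports Defs
begin

text \<open>Number the vertices \<open>v\<^sub>1, \<dots>, v\<^sub>n\<close> along the MA-ordering and call \<open>i\<close> a break if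
  \<open>d(V\<^sub>i, v\<^sub>i\<^sub>+\<^sub>1) < \<alpha>\<close>; the maximal \<open>\<alpha>\<close>-tight sets are the stretches between breaks. An edge
  crosses at \<open>v\<^sub>u\<close> if it contains \<open>v\<^sub>u\<close> and an earlier vertex \<open>v\<^sub>k\<close> of another tight set. An edge
  meeting \<open>r \<ge> 2\<close> tight sets crosses at least \<open>r - 1 \<ge> r/2\<close> times, so \<open>sum-deg(H')\<close> is at most
  twice the capacity of all crossings. Fix \<open>u\<close> and let \<open>s < u\<close> be the last break before it.
  Between \<open>v\<^sub>k\<close> and \<open>v\<^sub>u\<close> in different tight sets lies a break \<open>k \<le> i < u\<close>, so every edge
  crossing at \<open>v\<^sub>u\<close> meets \<open>V\<^sub>s\<close>, and by the MA property these edges have capacity at most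
  \<open>d(V\<^sub>s, v\<^sub>u) \<le> d(V\<^sub>s, v\<^sub>s\<^sub>+\<^sub>1) < \<alpha>\<close>.
  Summing over the \<open>n\<close> vertices gives \<open>2\<alpha>n\<close>.\<close>

definition interval_set :: "'v list \<Rightarrow> nat \<Rightarrow> nat \<Rightarrow> 'v set" where
  "interval_set vs p q = {vs ! i | i. p \<le> i \<and> i \<le> q}"

definition tight_interval ::
  "'e set \<Rightarrow> ('e \<Rightarrow> 'v set) \<Rightarrow> ('e \<Rightarrow> real) \<Rightarrow> 'v list \<Rightarrow> real \<Rightarrow> nat \<Rightarrow> nat \<Rightarrow> bool" where
  "tight_interval I ed c vs \<alpha> p q \<longleftrightarrow> p \<le> q \<and> q < length vs \<and>
      (\<forall>i. p < i \<and> i \<le> q \<longrightarrow> \<alpha> \<le> dd I ed c [set (take i vs), {vs ! i}])"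

lemma alpha_tight_iff_tight_interval:
  "alpha_tight I ed c vs \<alpha> S \<longleftrightarrow>
     (\<exists>p q. tight_interval I ed c vs \<alpha> p q \<and> S = interval_set vs p q)"
  unfolding alpha_tight_def tight_interval_def interval_set_def by blast

lemma tight_interval_less_length: "tight_interval I ed c vs \<alpha> p q \<Longrightarrow> q < length vs"
  by (simp add: tight_interval_def)

lemma nth_mem_interval_set_iff:
  assumes "distinct vs" "x < length vs" "q < length vs"
  shows "vs ! x \<in> interval_set vs p q \<longleftrightarrow> p \<le> x \<and> x \<le> q"
proof
  assume "vs ! x \<in> interval_set vs p q"
  then obtain i where i: "p \<le> i" "i \<le> q" "vs ! x = vs ! i" unfolding interval_set_def by blast
  with assms have "i = x" by (metis le_less_trans nth_eq_iff_index_eq)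
  with i show "p \<le> x \<and> x \<le> q" by simp
qed (auto simp: interval_set_def)

lemma interval_set_mono: "p' \<le> p \<Longrightarrow> q \<le> q' \<Longrightarrow> interval_set vs p q \<subseteq> interval_set vs p' q'"
  unfolding interval_set_def by force

lemma tight_interval_union:
  assumes "tight_interval I ed c vs \<alpha> p1 q1" "tight_interval I ed c vs \<alpha> p2 q2"
    and "p1 \<le> x" "x \<le> q1" "p2 \<le> x" "x \<le> q2"
  shows "tight_interval I ed c vs \<alpha> (min p1 p2) (max q1 q2)"
proof -
  have "\<alpha> \<le> dd I ed c [set (take i vs), {vs ! i}]" if "min p1 p2 < i" "i \<le> max q1 q2" for i
  proof -
    have "(p1 < i \<and> i \<le> q1) \<or> (p2 < i \<and> i \<le> q2)" using that assms(3-6) by linarith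
    then show ?thesis using assms(1,2) unfolding tight_interval_def by blast
  qed
  then show ?thesis using assms unfolding tight_interval_def by auto
qed

lemma max_alpha_tight_unique:
  assumes "distinct vs" "x < length vs"
    and "max_alpha_tight I ed c vs \<alpha> S1" "vs ! x \<in> S1"
    and "max_alpha_tight I ed c vs \<alpha> S2" "vs ! x \<in> S2"
  shows "S1 = S2"
proof -
  obtain p1 q1 where t1: "tight_interval I ed c vs \<alpha> p1 q1" "S1 = interval_set vs p1 q1"
    using assms(3) unfolding max_alpha_tight_def alpha_tight_iff_tight_interval by blast
  obtain p2 q2 where t2: "tight_interval I ed c vs \<alpha> p2 q2" "S2 = interval_set vs p2 q2"
    using assms(5) unfolding max_alpha_tight_def alpha_tight_iff_tight_interval by blast
  have x1: "p1 \<le> x" "x \<le> q1" and x2: "p2 \<le> x" "x \<le> q2"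
    using assms(1,2,4,6) t1 t2 by (auto simp: nth_mem_interval_set_iff tight_interval_less_length)
  define U where "U = interval_set vs (min p1 p2) (max q1 q2)"
  have "alpha_tight I ed c vs \<alpha> U"
    unfolding alpha_tight_iff_tight_interval U_def using tight_interval_union[OF t1(1) t2(1) x1 x2] by blast
  moreover have "S1 \<subseteq> U" "S2 \<subseteq> U" unfolding U_def t1(2) t2(2) by (simp_all add: interval_set_mono)
  ultimately show ?thesis using assms(3,5) unfolding max_alpha_tight_def by metis
qed

lemma max_alpha_tight_exists:
  assumes "distinct vs" "x < length vs"
  shows "\<exists>S. max_alpha_tight I ed c vs \<alpha> S \<and> vs ! x \<in> S"
proof -
  define P where "P = {(p, q). tight_interval I ed c vs \<alpha> p q \<and> p \<le> x \<and> x \<le> q}"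
  have fin: "finite P"
    by (rule finite_subset[of _ "{..<length vs} \<times> {..<length vs}"]) (auto simp: P_def tight_interval_def)
  have "(x, x) \<in> P" using assms(2) by (simp add: P_def tight_interval_def)
  define p0 where "p0 = Min (fst ` P)"
  define q0 where "q0 = Max (snd ` P)"
  have p0_le: "p0 \<le> p" and q0_ge: "q \<le> q0" if "(p, q) \<in> P" for p q
  proof -
    have "p \<in> fst ` P" "q \<in> snd ` P" using that by force+
    then show "p0 \<le> p" "q \<le> q0" by (simp_all add: p0_def q0_def fin)
  qed
  obtain q1 where pq1: "(p0, q1) \<in> P"
    using Min_in[of "fst ` P"] fin \<open>(x, x) \<in> P\<close> unfolding p0_def by fastforce
  obtain p2 where pq2: "(p2, q0) \<in> P"
    using Max_in[of "snd ` P"] fin \<open>(x, x) \<in> P\<close> unfolding q0_def by fastforce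
  have t1: "tight_interval I ed c vs \<alpha> p0 q1" "p0 \<le> x" "x \<le> q1" using pq1 by (auto simp: P_def)
  have t2: "tight_interval I ed c vs \<alpha> p2 q0" "p2 \<le> x" "x \<le> q0" using pq2 by (auto simp: P_def)
  have "tight_interval I ed c vs \<alpha> (min p0 p2) (max q1 q0)" using tight_interval_union[OF t1(1) t2(1) t1(2,3) t2(2,3)] .
  moreover have "min p0 p2 = p0" "max q1 q0 = q0"
    using p0_le[OF pq2] q0_ge[OF pq1] by auto
  ultimately have t0: "tight_interval I ed c vs \<alpha> p0 q0" by simp
  define S where "S = interval_set vs p0 q0"
  have xS: "vs ! x \<in> S"
    unfolding S_def using assms t1(2) t2(3) t0 by (simp add: nth_mem_interval_set_iff tight_interval_less_length)
  have "T = S" if T: "alpha_tight I ed c vs \<alpha> T" "S \<subseteq> T" for T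
  proof -
    obtain p q where t: "tight_interval I ed c vs \<alpha> p q" "T = interval_set vs p q"
      using T(1) unfolding alpha_tight_iff_tight_interval by blast
    with xS T(2) assms have "(p, q) \<in> P"
      by (auto simp: P_def nth_mem_interval_set_iff tight_interval_less_length)
    then have "T \<subseteq> S" unfolding t(2) S_def by (simp add: interval_set_mono p0_le q0_ge)
    with T(2) show "T = S" by blast
  qed
  moreover have "alpha_tight I ed c vs \<alpha> S" unfolding alpha_tight_iff_tight_interval S_def using t0 by blast
  ultimately show ?thesis using xS unfolding max_alpha_tight_def by blast
qed

lemma contr_map_eqI:
  assumes "distinct vs" "x < length vs" "max_alpha_tight I ed c vs \<alpha> S" "vs ! x \<in> S"
  shows "contr_map I ed c vs \<alpha> (vs ! x) = S"
  unfolding contr_map_def using assms max_alpha_tight_unique by (intro the_equality) blast+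

lemma contr_map_eq_if_no_break:
  assumes "distinct vs" "k < u" "u < length vs"
    and "\<forall>i. k < i \<and> i \<le> u \<longrightarrow> \<alpha> \<le> dd I ed c [set (take i vs), {vs ! i}]"
  shows "contr_map I ed c vs \<alpha> (vs ! k) = contr_map I ed c vs \<alpha> (vs ! u)"
proof -
  have k: "k < length vs" using assms(2,3) by simp
  obtain M where M: "max_alpha_tight I ed c vs \<alpha> M" "vs ! k \<in> M"
    using max_alpha_tight_exists[OF assms(1) k] by blast
  obtain p q where t: "tight_interval I ed c vs \<alpha> p q" "M = interval_set vs p q"
    using M(1) unfolding max_alpha_tight_def alpha_tight_iff_tight_interval by blast
  have kpq: "p \<le> k" "k \<le> q"
    using assms(1) k M(2) t by (auto simp: nth_mem_interval_set_iff tight_interval_less_length)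
  have "tight_interval I ed c vs \<alpha> k u" using assms(2-4) by (simp add: tight_interval_def)
  from tight_interval_union[OF t(1) this kpq order_refl less_imp_le[OF assms(2)]]
  have tU: "tight_interval I ed c vs \<alpha> (min p k) (max q u)" .
  define U where "U = interval_set vs (min p k) (max q u)"
  have "alpha_tight I ed c vs \<alpha> U" unfolding alpha_tight_iff_tight_interval U_def using tU by blast
  moreover have "M \<subseteq> U" unfolding U_def t(2) by (simp add: interval_set_mono)
  ultimately have "U = M" using M(1) unfolding max_alpha_tight_def by blast
  moreover have "vs ! u \<in> U"
    unfolding U_def using nth_mem_interval_set_iff[OF assms(1,3) tight_interval_less_length[OF tU]] kpq assms(2) by simp
  ultimately show ?thesis using contr_map_eqI[OF assms(1) k M] contr_map_eqI[OF assms(1,3) M(1)] by simp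
qed

lemma break_between_different_blocks:
  assumes "distinct vs" "k < u" "u < length vs"
    and "contr_map I ed c vs \<alpha> (vs ! k) \<noteq> contr_map I ed c vs \<alpha> (vs ! u)"
  shows "\<exists>i. k < i \<and> i \<le> u \<and> dd I ed c [set (take i vs), {vs ! i}] < \<alpha>"
  using contr_map_eq_if_no_break[OF assms(1-3)] assms(4) by (meson not_le)

definition crosses_at ::
  "'e set \<Rightarrow> ('e \<Rightarrow> 'v set) \<Rightarrow> ('e \<Rightarrow> real) \<Rightarrow> 'v list \<Rightarrow> real \<Rightarrow> 'e \<Rightarrow> nat \<Rightarrow> bool" where
  "crosses_at I ed c vs \<alpha> e u \<longleftrightarrow> u < length vs \<and> vs ! u \<in> ed e \<and>
     (\<exists>k<u. vs ! k \<in> ed e \<and> contr_map I ed c vs \<alpha> (vs ! k) \<noteq> contr_map I ed c vs \<alpha> (vs ! u))"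

lemma card_image_le_twice_card_changes:
  fixes K :: "'a::linorder set"
  assumes "finite K" "card (f ` K) \<noteq> 1"
  shows "card (f ` K) \<le> 2 * card {u\<in>K. \<exists>k\<in>K. k < u \<and> f k \<noteq> f u}"
proof (cases "K = {}")
  case False
  define T where "T = {u\<in>K. \<exists>k\<in>K. k < u \<and> f k \<noteq> f u}"
  have "Min K \<in> K" using assms(1) False by simp
  have "f ` K \<subseteq> insert (f (Min K)) (f ` T)"
  proof
    fix y assume "y \<in> f ` K"
    then obtain u where u: "u \<in> K" "y = f u" by blast
    moreover have "Min K < u" if "f u \<noteq> f (Min K)"
      using that u(1) assms(1) by (metis Min_le order.not_eq_order_implies_strict)
    ultimately show "y \<in> insert (f (Min K)) (f ` T)"
      using \<open>Min K \<in> K\<close> unfolding T_def by (cases "f u = f (Min K)") force+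
  qed
  moreover have "finite T" using assms(1) unfolding T_def by simp
  ultimately have "card (f ` K) \<le> card (insert (f (Min K)) (f ` T))" by (intro card_mono) auto
  also have "\<dots> \<le> Suc (card (f ` T))" using \<open>finite T\<close> by (simp add: card_insert_if)
  also have "\<dots> \<le> Suc (card T)" using card_image_le[of T f] assms(1) by (simp add: T_def)
  finally have "card (f ` K) \<le> Suc (card T)" .
  moreover have "card (f ` K) \<noteq> 0" using assms(1) False by simp
  ultimately show ?thesis using assms(2) unfolding T_def by linarith
qed simp

lemma card_contr_edge_le_twice_crossings:
  assumes "hypergraph V I ed c" "ordering_of V vs" "e \<in> I"
    and "card (contr_edge I ed c vs \<alpha> e) \<noteq> 1"
  shows "card (contr_edge I ed c vs \<alpha> e) \<le> 2 * card {u\<in>{..<length vs}. crosses_at I ed c vs \<alpha> e u}"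
proof -
  define g where "g = contr_map I ed c vs \<alpha> \<circ> (!) vs"
  define K where "K = {u. u < length vs \<and> vs ! u \<in> ed e}"
  have "ed e \<subseteq> set vs" using assms(1-3) by (auto simp: hypergraph_def ordering_of_def)
  have "x \<in> (!) vs ` K" if x: "x \<in> ed e" for x
  proof -
    have "x \<in> set vs" using x \<open>ed e \<subseteq> set vs\<close> by blast
    then obtain i where "i < length vs" "vs ! i = x" by (metis in_set_conv_nth)
    then show ?thesis using x unfolding K_def by blast
  qed
  then have "ed e = (!) vs ` K" unfolding K_def by auto
  then have "contr_edge I ed c vs \<alpha> e = g ` K" unfolding contr_edge_def g_def by (simp add: image_comp)
  moreover have "{u\<in>K. \<exists>k\<in>K. k < u \<and> g k \<noteq> g u} = {u\<in>{..<length vs}. crosses_at I ed c vs \<alpha> e u}"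
    unfolding K_def g_def crosses_at_def by (intro Collect_cong) (auto dest: less_trans)
  moreover have "finite K" unfolding K_def by simp
  ultimately show ?thesis using card_image_le_twice_card_changes[of K g] assms(4) by simp
qed

lemma crossing_edge_meets_prefix:
  assumes "distinct vs" "crosses_at I ed c vs \<alpha> e u"
    and "\<forall>i. s < i \<and> i \<le> u \<longrightarrow> \<alpha> \<le> dd I ed c [set (take i vs), {vs ! i}]"
  shows "ed e \<inter> set (take s vs) \<noteq> {}"
proof -
  obtain k where k: "k < u" "u < length vs" "vs ! k \<in> ed e"
    "contr_map I ed c vs \<alpha> (vs ! k) \<noteq> contr_map I ed c vs \<alpha> (vs ! u)"
    using assms(2) unfolding crosses_at_def by blast
  then obtain i where "k < i" "i \<le> u" "dd I ed c [set (take i vs), {vs ! i}] < \<alpha>"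
    using break_between_different_blocks[OF assms(1)] by blast
  with assms(3) have "k < s" by (meson le_less_trans not_le)
  then have "vs ! k \<in> set (take s vs)" using k(1,2) by (auto simp: in_set_conv_nth intro!: exI[of _ k])
  with k(3) show ?thesis by blast
qed

lemma sum_capacity_crossing_le:
  assumes "hypergraph V I ed c" "MA_ordering V I ed c vs" "0 \<le> \<alpha>"
  shows "(\<Sum>e\<in>{e\<in>I. crosses_at I ed c vs \<alpha> e u}. c e) \<le> \<alpha>"
proof (cases "\<exists>e\<in>I. crosses_at I ed c vs \<alpha> e u")
  case False
  then have "{e\<in>I. crosses_at I ed c vs \<alpha> e u} = {}" by blast
  then show ?thesis using assms(3) by (metis sum.empty)
next
  case True
  then obtain e k where k: "k < u" "u < length vs"
    "contr_map I ed c vs \<alpha> (vs ! k) \<noteq> contr_map I ed c vs \<alpha> (vs ! u)"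
    unfolding crosses_at_def by blast
  have d: "distinct vs" using assms(2) by (simp add: MA_ordering_def ordering_of_def)
  have cpos: "\<And>e. e \<in> I \<Longrightarrow> 0 \<le> c e" and "finite I" using assms(1) by (auto simp: hypergraph_def)
  define B where "B = {i. i \<le> u \<and> dd I ed c [set (take i vs), {vs ! i}] < \<alpha>}"
  define s where "s = Max B"
  have "finite B" unfolding B_def by (rule finite_subset[of _ "{..u}"]) auto
  moreover have "B \<noteq> {}"
    using break_between_different_blocks[OF d k] unfolding B_def by fastforce
  ultimately have s: "s \<le> u" "dd I ed c [set (take s vs), {vs ! s}] < \<alpha>"
    and no_break: "\<forall>i. s < i \<and> i \<le> u \<longrightarrow> \<alpha> \<le> dd I ed c [set (take i vs), {vs ! i}]"
    using Max_in[of B] Max_ge[of B] unfolding s_def B_def by (auto simp: not_less[symmetric])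
  have "{e\<in>I. crosses_at I ed c vs \<alpha> e u}
      \<subseteq> {e\<in>I. \<forall>A\<in>set [set (take s vs), {vs ! u}]. ed e \<inter> A \<noteq> {}}"
    using crossing_edge_meets_prefix[OF d _ no_break] by (auto simp: crosses_at_def)
  then have "(\<Sum>e\<in>{e\<in>I. crosses_at I ed c vs \<alpha> e u}. c e) \<le> dd I ed c [set (take s vs), {vs ! u}]"
    unfolding dd_def using \<open>finite I\<close> cpos by (intro sum_mono2) auto
  also have "\<dots> \<le> dd I ed c [set (take s vs), {vs ! s}]"
    using assms(2) s(1) k(2) unfolding MA_ordering_def by (cases "s = u") auto
  also have "\<dots> < \<alpha>" using s(2) .
  finally show ?thesis by simp
qed

lemma sum_card_filter_times_swap:
  fixes c :: "'a \<Rightarrow> 'c::semiring_1"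
  assumes "finite A" "finite B"
  shows "(\<Sum>a\<in>A. of_nat (card {b\<in>B. P a b}) * c a) = (\<Sum>b\<in>B. \<Sum>a\<in>{a\<in>A. P a b}. c a)"
proof -
  have "(\<Sum>a\<in>A. of_nat (card {b\<in>B. P a b}) * c a) = (\<Sum>a\<in>A. \<Sum>b\<in>B. if P a b then c a else 0)"
    using assms(2) by (simp add: sum.inter_filter[symmetric])
  also have "\<dots> = (\<Sum>b\<in>B. \<Sum>a\<in>A. if P a b then c a else 0)" by (rule sum.swap)
  also have "\<dots> = (\<Sum>b\<in>B. \<Sum>a\<in>{a\<in>A. P a b}. c a)" using assms(1) by (simp add: sum.inter_filter)
  finally show ?thesis .
qed

lemma sum_deg_contraction_le_twice_crossings:
  assumes "hypergraph V I ed c" "ordering_of V vs"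
  shows "sum_deg (contr_edge_idx I ed c vs \<alpha>) (contr_edge I ed c vs \<alpha>) c
           \<le> 2 * (\<Sum>e\<in>I. real (card {u\<in>{..<length vs}. crosses_at I ed c vs \<alpha> e u}) * c e)"
proof -
  define X where "X e = {u\<in>{..<length vs}. crosses_at I ed c vs \<alpha> e u}" for e
  have "finite I" and cpos: "\<And>e. e \<in> I \<Longrightarrow> 0 \<le> c e" using assms(1) by (auto simp: hypergraph_def)
  have "real (card (contr_edge I ed c vs \<alpha> e)) \<le> 2 * real (card (X e))"
    if "e \<in> contr_edge_idx I ed c vs \<alpha>" for e
  proof -
    have "card (contr_edge I ed c vs \<alpha> e) \<le> 2 * card (X e)"
      using card_contr_edge_le_twice_crossings[OF assms] that
      unfolding X_def contr_edge_idx_def contr_edge_def by blast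
    then show ?thesis by (metis of_nat_mono of_nat_mult of_nat_numeral)
  qed
  then have "sum_deg (contr_edge_idx I ed c vs \<alpha>) (contr_edge I ed c vs \<alpha>) c
      \<le> (\<Sum>e\<in>contr_edge_idx I ed c vs \<alpha>. 2 * real (card (X e)) * c e)"
    unfolding sum_deg_def using cpos by (intro sum_mono mult_right_mono) (auto simp: contr_edge_idx_def)
  also have "\<dots> \<le> (\<Sum>e\<in>I. 2 * real (card (X e)) * c e)"
    using \<open>finite I\<close> cpos by (intro sum_mono2) (auto simp: contr_edge_idx_def)
  finally show ?thesis by (simp add: X_def sum_distrib_left mult.assoc)
qed

theorem mainTheorem18:
  fixes V :: "'v set" and I :: "'e set" and ed :: "'e \<Rightarrow> 'v set" and c :: "'e \<Rightarrow> real"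
    and vs :: "'v list" and \<alpha> :: real
  assumes "hypergraph V I ed c"
    and "MA_ordering V I ed c vs"
    and "0 \<le> \<alpha>"
  shows "sum_deg (contr_edge_idx I ed c vs \<alpha>) (contr_edge I ed c vs \<alpha>) c
           \<le> 2 * \<alpha> * real (card V)"
proof -
  have ord: "ordering_of V vs" using assms(2) by (simp add: MA_ordering_def)
  have "finite I" using assms(1) by (simp add: hypergraph_def)
  have "sum_deg (contr_edge_idx I ed c vs \<alpha>) (contr_edge I ed c vs \<alpha>) c
      \<le> 2 * (\<Sum>e\<in>I. real (card {u\<in>{..<length vs}. crosses_at I ed c vs \<alpha> e u}) * c e)"
    using sum_deg_contraction_le_twice_crossings[OF assms(1) ord] .
  also have "\<dots> = 2 * (\<Sum>u<length vs. \<Sum>e\<in>{e\<in>I. crosses_at I ed c vs \<alpha> e u}. c e)"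
    using sum_card_filter_times_swap[OF \<open>finite I\<close> finite_lessThan] by simp
  also have "\<dots> \<le> 2 * (\<Sum>u<length vs. \<alpha>)"
    using sum_capacity_crossing_le[OF assms] by (intro mult_left_mono sum_mono) auto
  also have "\<dots> = 2 * \<alpha> * real (card V)"
    using ord distinct_card[of vs] by (simp add: ordering_of_def)
  finally show ?thesis .
qed

end
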